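(* Let $U_2$ be a unitary matrix with real entries having a unique (up to scalars) eigenvector $|\phi_0\rangle$ of eigenvalue $1$, chosen with real entries and norm $1$; let $|\mu\rangle$ be a unit vector with real entries, $U_1=I-2|\mu\rangle\langle\mu|$ and $U=U_2U_1$. Let $\varepsilon\in(0,1)$. For every $T\ge\max\{1,\mathsf{QHT}_\varepsilon(U_2,|\mu\rangle)\}$, the procedure $\mathbf{MainDetect}(U_2,|\mu\rangle,1/T,\varepsilon)$ accepts $|\phi_0\rangle$ with probability $1-O(\varepsilon)$ if $\langle\phi_0|\mu\rangle\ne0$, and accepts with probability $0$ otherwise.
   Context: Let $|\tilde\phi_0\rangle=|\phi_0\rangle-\langle\mu|\phi_0\rangle|\mu\rangle$, decomposed in eigenvectors of $U$ as $|\tilde\phi_0\rangle=\delta_0|w_0\rangle+\sum_j\delta_j(|w_j^+\rangle+|w_j^-\rangle)+\delta_{-1}|w_{-1}\rangle$ with real coefficients ($|w_0\rangle,|w_{-1}\rangle$ unit eigenvectors of eigenvalues $\pm1$; $|w_j^\pm\rangle$ unit eigenvectors of eigenvalues $e^{\pm i\alpha_j}$, $0<\alpha_j<\pi$, $|w_j^-\rangle=\overline{|w_j^+\rangle}$). $\mathit{QH}$ takes value $1/\alpha_j$ with probability $2\delta_j^2$, $1/\pi$ with probability $\delta_{-1}^2$, and $0$ otherwise; $\mathsf{QHT}_\varepsilon(U_2,|\mu\rangle)=\min\{y:\Pr[\mathit{QH}>y]\le\varepsilon\}$. $\mathbf{Estimate}$ is the standard phase estimation circuit for $U$ with precision $\Delta$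 (outputs an eigenphase within $\Delta$ with error probability at most $1/3$, outputs $0$ with certainty on $1$-eigenvectors, uses $O(1/\Delta)$ calls to $\text{c-}U$ and its inverse). $\mathbf{Detect}(U,\Delta,\varepsilon)$: apply $\Theta(\log(1/\varepsilon))$ times $\mathbf{Estimate}$ with precision $\Delta$ to the same input state; accept iff at least one estimated phase is nonzero. $\mathbf{MainDetect}(U_2,|\mu\rangle,\Delta,\varepsilon)$ on input $|\psi\rangle$: measure according to the decomposition $(|\mu\rangle,|\mu\rangle^\perp)$; if the outcome is $|\mu\rangle$, accept; otherwise apply $\mathbf{Detect}(U,\Delta,\varepsilon)$ to the resulting state. *)

theory Defs
  imports "HOL-Probability.Probability"
begin

text \<open>Finite-dimensional linear algebra on C^n, with vectors represented as
  functions nat => complex and n x n matrices as nat => nat => complex;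
  only indices below n are meaningful.\<close>

definition cinner :: "nat \<Rightarrow> (nat \<Rightarrow> complex) \<Rightarrow> (nat \<Rightarrow> complex) \<Rightarrow> complex" where
  "cinner n u v = (\<Sum>i<n. cnj (u i) * v i)"

definition cnorm2 :: "nat \<Rightarrow> (nat \<Rightarrow> complex) \<Rightarrow> real" where
  "cnorm2 n v = (\<Sum>i<n. (cmod (v i))\<^sup>2)"

definition mat_vec :: "nat \<Rightarrow> (nat \<Rightarrow> nat \<Rightarrow> complex) \<Rightarrow> (nat \<Rightarrow> complex) \<Rightarrow> (nat \<Rightarrow> complex)" where
  "mat_vec n A v = (\<lambda>i. \<Sum>j<n. A i j * v j)"

definition mat_mult :: "nat \<Rightarrow> (nat \<Rightarrow> nat \<Rightarrow> complex) \<Rightarrow> (nat \<Rightarrow> nat \<Rightarrow> complex) \<Rightarrow> (nat \<Rightarrow> nat \<Rightarrow> complex)" where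
  "mat_mult n A B = (\<lambda>i j. \<Sum>k<n. A i k * B k j)"

definition unitary_mat :: "nat \<Rightarrow> (nat \<Rightarrow> nat \<Rightarrow> complex) \<Rightarrow> bool" where
  "unitary_mat n A \<longleftrightarrow> (\<forall>i<n. \<forall>j<n. (\<Sum>k<n. cnj (A k i) * A k j) = (if i = j then 1 else 0))"

definition real_mat :: "nat \<Rightarrow> (nat \<Rightarrow> nat \<Rightarrow> complex) \<Rightarrow> bool" where
  "real_mat n A \<longleftrightarrow> (\<forall>i<n. \<forall>j<n. Im (A i j) = 0)"

definition real_vec :: "nat \<Rightarrow> (nat \<Rightarrow> complex) \<Rightarrow> bool" where
  "real_vec n v \<longleftrightarrow> (\<forall>i<n. Im (v i) = 0)"

definition reflection :: "(nat \<Rightarrow> complex) \<Rightarrow> (nat \<Rightarrow> nat \<Rightarrow> complex)" where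
  "reflection mu = (\<lambda>i j. (if i = j then 1 else 0) - 2 * mu i * cnj (mu j))"

definition perp_part :: "nat \<Rightarrow> (nat \<Rightarrow> complex) \<Rightarrow> (nat \<Rightarrow> complex) \<Rightarrow> (nat \<Rightarrow> complex)" where
  "perp_part n mu phi = (\<lambda>i. phi i - cinner n mu phi * mu i)"

definition orthonormal_eigenbasis ::
  "nat \<Rightarrow> (nat \<Rightarrow> nat \<Rightarrow> complex) \<Rightarrow> (nat \<Rightarrow> nat \<Rightarrow> complex) \<Rightarrow> (nat \<Rightarrow> real) \<Rightarrow> bool" where
  "orthonormal_eigenbasis n U w \<theta> \<longleftrightarrow>
     (\<forall>k<n. \<forall>l<n. cinner n (w k) (w l) = (if k = l then 1 else 0)) \<and>
     (\<forall>k<n. -pi < \<theta> k \<and> \<theta> k \<le> pi \<and> (\<forall>i<n. mat_vec n U (w k) i = cis (\<theta> k) * w k i))"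

definition phase_dist :: "real \<Rightarrow> real \<Rightarrow> real" where
  "phase_dist a b = \<bar>Arg (cis (a - b))\<bar>"

text \<open>Value of the random variable QH on an eigenvector of eigenphase theta:
  1/alpha for eigenvalues e^{+-i alpha} (alpha in (0,pi]), 0 for eigenvalue 1.\<close>
definition QH_val :: "real \<Rightarrow> real" where
  "QH_val t = (if t = 0 then 0 else 1 / \<bar>t\<bar>)"

text \<open>Pr[QH > y], where the probability of an eigenvector component equals the
  squared modulus of the coefficient of |phi~_0> on it.\<close>
definition QH_tail ::
  "nat \<Rightarrow> (nat \<Rightarrow> nat \<Rightarrow> complex) \<Rightarrow> (nat \<Rightarrow> complex) \<Rightarrow> (nat \<Rightarrow> complex)
     \<Rightarrow> (nat \<Rightarrow> nat \<Rightarrow> complex) \<Rightarrow> (nat \<Rightarrow> real) \<Rightarrow> real \<Rightarrow> real" where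
  "QH_tail n U2 mu phi0 w \<theta> y =
     (\<Sum>k<n. if QH_val (\<theta> k) > y then (cmod (cinner n (w k) (perp_part n mu phi0)))\<^sup>2 else 0)"

text \<open>QHT_eps(U2, mu) = min { y : Pr[QH > y] <= eps } (QH is nonnegative, so y ranges over y >= 0).\<close>
definition QHT ::
  "nat \<Rightarrow> (nat \<Rightarrow> nat \<Rightarrow> complex) \<Rightarrow> (nat \<Rightarrow> complex) \<Rightarrow> (nat \<Rightarrow> complex)
     \<Rightarrow> (nat \<Rightarrow> nat \<Rightarrow> complex) \<Rightarrow> (nat \<Rightarrow> real) \<Rightarrow> real \<Rightarrow> real" where
  "QHT n U2 mu phi0 w \<theta> \<epsilon> = Inf {y. 0 \<le> y \<and> QH_tail n U2 mu phi0 w \<theta> y \<le> \<epsilon>}"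

text \<open>Abstract model of Estimate with precision Delta: on an eigenvector of U of
  eigenphase theta it leaves the eigenvector untouched and produces an output
  phase distributed according to est theta.\<close>
definition valid_estimate :: "real \<Rightarrow> (real \<Rightarrow> real pmf) \<Rightarrow> bool" where
  "valid_estimate \<Delta> est \<longleftrightarrow>
     (\<forall>t. -pi < t \<and> t \<le> pi \<longrightarrow> measure_pmf.prob (est t) {y. phase_dist y t < \<Delta>} \<ge> 2/3) \<and>
     est 0 = return_pmf 0"

text \<open>Acceptance probability of Detect (m repetitions of Estimate on the same
  register; accept iff some output is nonzero) applied to the (unnormalised)
  state v: ||v||^2 - sum_k |<w_k|v>|^2 Pr[est(theta_k) = 0]^m.\<close>
definition detect_accept ::
  "nat \<Rightarrow> (nat \<Rightarrow> nat \<Rightarrow> complex) \<Rightarrow> (nat \<Rightarrow> real) \<Rightarrow> (real \<Rightarrow> real pmf) \<Rightarrow> nat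
     \<Rightarrow> (nat \<Rightarrow> complex) \<Rightarrow> real" where
  "detect_accept n w \<theta> est m v =
     cnorm2 n v - (\<Sum>k<n. (cmod (cinner n (w k) v))\<^sup>2 * (pmf (est (\<theta> k)) 0) ^ m)"

text \<open>Acceptance probability of MainDetect on input phi: measure in (mu, mu^perp);
  outcome mu (probability |<mu|phi>|^2) accepts; otherwise Detect is run on the
  normalised post-measurement state, which contributes
  ||phi~||^2 * detect(phi~/||phi~||) = detect_accept(phi~) by homogeneity.\<close>
definition main_detect_accept ::
  "nat \<Rightarrow> (nat \<Rightarrow> complex) \<Rightarrow> (nat \<Rightarrow> nat \<Rightarrow> complex) \<Rightarrow> (nat \<Rightarrow> real) \<Rightarrow> (real \<Rightarrow> real pmf)
     \<Rightarrow> nat \<Rightarrow> (nat \<Rightarrow> complex) \<Rightarrow> real" where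
  "main_detect_accept n mu w \<theta> est m phi =
     (cmod (cinner n mu phi))\<^sup>2 + detect_accept n w \<theta> est m (perp_part n mu phi)"

end

theory Submission
  imports Defs "Jordan_Normal_Form.Determinant"
begin

text \<open>Expand \<open>|\<phi>~\<^sub>0\<rangle>\<close> in the eigenbasis of \<open>U = U\<^sub>2U\<^sub>1\<close>; the rejection probability of
  MainDetect is \<open>\<Sum>\<^sub>k |\<langle>w\<^sub>k|\<phi>~\<^sub>0\<rangle>|\<^sup>2 Pr[Estimate(\<theta>\<^sub>k) = 0]\<^sup>m\<close>.
  If \<open>\<langle>\<phi>\<^sub>0|\<mu>\<rangle> = 0\<close>, then \<open>\<phi>~\<^sub>0 = \<phi>\<^sub>0\<close> is fixed by \<open>U\<close>, so its whole weight lies on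
  phase-0 eigenvectors, where Estimate outputs 0 surely: nothing is accepted.
  If \<open>\<langle>\<phi>\<^sub>0|\<mu>\<rangle> \<noteq> 0\<close>, then \<open>U\<close> has no fixed vector: a fixed \<open>w\<close> satisfies
  \<open>\<langle>\<phi>\<^sub>0|w\<rangle> = \<langle>\<phi>\<^sub>0|U\<^sub>1w\<rangle>\<close>, which forces \<open>\<langle>\<mu>|w\<rangle> = 0\<close>, so \<open>w\<close> is fixed by \<open>U\<^sub>2\<close>, hence
  proportional to \<open>\<phi>\<^sub>0\<close> and thus zero. So every eigenphase is nonzero. Those with
  \<open>1/|\<theta>\<^sub>k| \<le> T\<close> are resolved by each run of Estimate with probability \<open>\<ge> 2/3\<close>, which
  after \<open>m \<ge> ln(1/\<epsilon>)\<close> runs leaves weight \<open>\<le> \<epsilon>\<close>; the others carry total weight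
  \<open>Pr[QH > T] \<le> \<epsilon>\<close> because \<open>T \<ge> QHT\<^sub>\<epsilon>\<close>.\<close>

lemma cinner_commute: "cinner n u v = cnj (cinner n v u)"
  by (simp add: cinner_def mult.commute)

lemma mat_vec_mat_mult: "mat_vec n (mat_mult n A B) v i = mat_vec n A (mat_vec n B v) i"
proof -
  have "mat_vec n (mat_mult n A B) v i = (\<Sum>j<n. \<Sum>k<n. A i k * (B k j * v j))"
    by (simp add: mat_vec_def mat_mult_def sum_distrib_right sum_distrib_left mult_ac)
  also have "\<dots> = (\<Sum>k<n. \<Sum>j<n. A i k * (B k j * v j))" by (rule sum.swap)
  finally show ?thesis by (simp add: mat_vec_def sum_distrib_left)
qed

lemma mat_vec_reflection:
  assumes "i < n"
  shows "mat_vec n (reflection mu) v i = v i - 2 * mu i * cinner n mu v"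
proof -
  have "\<And>j. reflection mu i j * v j = (if i = j then v j else 0) - 2 * mu i * (cnj (mu j) * v j)"
    by (simp add: reflection_def algebra_simps)
  then have "mat_vec n (reflection mu) v i
      = (\<Sum>j<n. if i = j then v j else 0) - (\<Sum>j<n. 2 * mu i * (cnj (mu j) * v j))"
    unfolding mat_vec_def by (simp only: sum_subtractf)
  then show ?thesis using assms by (simp add: cinner_def sum_distrib_left)
qed

subsection \<open>Orthonormal bases\<close>

text \<open>\<open>n\<close> orthonormal vectors in \<open>\<complex>\<^sup>n\<close> form a basis: the matrix \<open>W\<close> with columns \<open>w\<^sub>k\<close>
  has \<open>W\<^sup>*W = I\<close>, hence also \<open>WW\<^sup>* = I\<close>.\<close>
lemma orthonormal_sum_outer:
  assumes orth: "\<forall>k<n. \<forall>l<n. cinner n (w k) (w l) = (if k = l then 1 else 0)"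
    and "i < n" "j < n"
  shows "(\<Sum>k<n. w k i * cnj (w k j)) = (if i = j then 1 else 0)"
proof -
  define W where "W = mat n n (\<lambda>(i, k). w k i)"
  define W' where "W' = mat n n (\<lambda>(k, i). cnj (w k i))"
  have W: "W \<in> carrier_mat n n" and W': "W' \<in> carrier_mat n n"
    by (auto simp: W_def W'_def)
  have "W' * W = 1\<^sub>m n"
  proof (rule eq_matI)
    fix k l assume kl: "k < dim_row (1\<^sub>m n)" "l < dim_col (1\<^sub>m n)"
    then have "(W' * W) $$ (k, l) = cinner n (w k) (w l)"
      by (simp add: W_def W'_def scalar_prod_def atLeast0LessThan cinner_def)
    then show "(W' * W) $$ (k, l) = 1\<^sub>m n $$ (k, l)" using kl orth by auto
  qed (auto simp: W_def W'_def)
  then have "W * W' = 1\<^sub>m n" using mat_mult_left_right_inverse[OF W' W] by auto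
  moreover have "(W * W') $$ (i, j) = (\<Sum>k<n. w k i * cnj (w k j))"
    using assms by (simp add: W_def W'_def scalar_prod_def atLeast0LessThan)
  ultimately show ?thesis using assms by auto
qed

lemma orthonormal_expansion:
  assumes orth: "\<forall>k<n. \<forall>l<n. cinner n (w k) (w l) = (if k = l then 1 else 0)" and "i < n"
  shows "v i = (\<Sum>l<n. cinner n (w l) v * w l i)"
proof -
  have "(\<Sum>l<n. cinner n (w l) v * w l i) = (\<Sum>l<n. \<Sum>j<n. cnj (w l j) * v j * w l i)"
    by (simp add: cinner_def sum_distrib_right)
  also have "\<dots> = (\<Sum>j<n. v j * (\<Sum>l<n. w l i * cnj (w l j)))"
    by (subst sum.swap) (simp add: sum_distrib_left mult_ac)
  also have "\<dots> = (\<Sum>j<n. if i = j then v j else 0)"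
    using orthonormal_sum_outer[OF orth \<open>i < n\<close>] by (intro sum.cong) auto
  finally show ?thesis using \<open>i < n\<close> by simp
qed

lemma orthonormal_parseval:
  assumes orth: "\<forall>k<n. \<forall>l<n. cinner n (w k) (w l) = (if k = l then 1 else 0)"
  shows "cnorm2 n v = (\<Sum>l<n. (cmod (cinner n (w l) v))\<^sup>2)"
proof -
  have "complex_of_real (\<Sum>l<n. (cmod (cinner n (w l) v))\<^sup>2)
      = (\<Sum>l<n. \<Sum>j<n. cnj (w l j) * v j * cnj (cinner n (w l) v))"
    by (simp only: of_real_sum complex_norm_square) (simp add: cinner_def sum_distrib_right)
  also have "\<dots> = (\<Sum>j<n. v j * cnj (\<Sum>l<n. cinner n (w l) v * w l j))"
    by (subst sum.swap) (simp add: sum_distrib_left mult_ac)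
  also have "\<dots> = (\<Sum>j<n. v j * cnj (v j))"
    using orthonormal_expansion[OF orth, of _ v] by simp
  also have "\<dots> = complex_of_real (cnorm2 n v)"
    by (simp only: cnorm2_def of_real_sum complex_norm_square)
  finally show ?thesis using of_real_eq_iff by metis
qed

lemma orthonormal_eigenbasisD:
  assumes "orthonormal_eigenbasis n U w \<theta>"
  shows "\<forall>k<n. \<forall>l<n. cinner n (w k) (w l) = (if k = l then 1 else 0)"
    and "\<And>k i. k < n \<Longrightarrow> i < n \<Longrightarrow> mat_vec n U (w k) i = cis (\<theta> k) * w k i"
    and "\<And>k. k < n \<Longrightarrow> -pi < \<theta> k \<and> \<theta> k \<le> pi"
  using assms unfolding orthonormal_eigenbasis_def by auto

lemma fixed_vector_orthogonal_eigenvector: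
  assumes basis: "orthonormal_eigenbasis n U w \<theta>"
    and fixed: "\<forall>i<n. mat_vec n U v i = v i"
    and "k < n" "\<theta> k \<noteq> 0"
  shows "cinner n (w k) v = 0"
proof -
  note orth = orthonormal_eigenbasisD(1)[OF basis]
  have Uv: "mat_vec n U v i = (\<Sum>l<n. cinner n (w l) v * cis (\<theta> l) * w l i)" if "i < n" for i
  proof -
    have "mat_vec n U v i = (\<Sum>j<n. U i j * (\<Sum>l<n. cinner n (w l) v * w l j))"
      unfolding mat_vec_def using orthonormal_expansion[OF orth, of _ v] by (intro sum.cong) auto
    also have "\<dots> = (\<Sum>l<n. cinner n (w l) v * mat_vec n U (w l) i)"
      by (simp add: mat_vec_def sum_distrib_left sum_distrib_right mult_ac) (rule sum.swap)
    finally show ?thesis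
      using orthonormal_eigenbasisD(2)[OF basis _ that] by (simp add: mult.assoc)
  qed
  have "cinner n (w k) v = cinner n (w k) (mat_vec n U v)"
    unfolding cinner_def using fixed by (intro sum.cong) auto
  also have "\<dots> = (\<Sum>i<n. \<Sum>l<n. cinner n (w l) v * cis (\<theta> l) * (cnj (w k i) * w l i))"
    by (simp add: cinner_def[of n "w k"] Uv sum_distrib_left mult_ac)
  also have "\<dots> = (\<Sum>l<n. cinner n (w l) v * cis (\<theta> l) * cinner n (w k) (w l))"
    by (subst sum.swap) (simp add: cinner_def[of n "w k"] sum_distrib_left)
  also have "\<dots> = (\<Sum>l<n. if l = k then cinner n (w l) v * cis (\<theta> l) else 0)"
    using orth \<open>k < n\<close> by (intro sum.cong) auto
  also have "\<dots> = cinner n (w k) v * cis (\<theta> k)" using \<open>k < n\<close> by simp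
  finally have "cinner n (w k) v * (cis (\<theta> k) - 1) = 0" by (simp add: algebra_simps)
  moreover have "cis (\<theta> k) \<noteq> 1"
  proof
    assume "cis (\<theta> k) = 1"
    then have "Arg (cis (\<theta> k)) = 0" by simp
    moreover have "Arg (cis (\<theta> k)) = \<theta> k"
      using orthonormal_eigenbasisD(3)[OF basis \<open>k < n\<close>] by (intro Arg_cis) auto
    ultimately show False using \<open>\<theta> k \<noteq> 0\<close> by simp
  qed
  ultimately show ?thesis by simp
qed

subsection \<open>The walk operator \<open>U\<^sub>2U\<^sub>1\<close>\<close>

lemma cinner_unitary_fixed:
  assumes unitary: "unitary_mat n U" and fixed: "\<forall>i<n. mat_vec n U phi i = phi i"
  shows "cinner n phi (mat_vec n U u) = cinner n phi u"
proof -
  have adjoint_fixed: "(\<Sum>i<n. cnj (U i j) * phi i) = phi j" if "j < n" for j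
  proof -
    have "(\<Sum>i<n. cnj (U i j) * phi i) = (\<Sum>i<n. cnj (U i j) * (\<Sum>l<n. U i l * phi l))"
      using fixed by (intro sum.cong) (auto simp: mat_vec_def)
    also have "\<dots> = (\<Sum>l<n. (\<Sum>i<n. cnj (U i j) * U i l) * phi l)"
      by (simp add: sum_distrib_left sum_distrib_right mult_ac) (rule sum.swap)
    also have "\<dots> = (\<Sum>l<n. if j = l then phi l else 0)"
      using unitary that by (intro sum.cong) (auto simp: unitary_mat_def)
    finally show ?thesis using that by simp
  qed
  have "cinner n phi (mat_vec n U u) = (\<Sum>i<n. \<Sum>j<n. cnj (phi i) * U i j * u j)"
    by (simp add: cinner_def mat_vec_def sum_distrib_left mult_ac)
  also have "\<dots> = (\<Sum>j<n. \<Sum>i<n. cnj (phi i) * U i j * u j)" by (rule sum.swap)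
  also have "\<dots> = (\<Sum>j<n. cnj (\<Sum>i<n. cnj (U i j) * phi i) * u j)"
    by (simp add: sum_distrib_right sum_distrib_left mult_ac)
  finally show ?thesis unfolding cinner_def using adjoint_fixed by simp
qed

lemma fixed_vector_mult_reflection:
  assumes unitary: "unitary_mat n U2" and fixed: "\<forall>i<n. mat_vec n U2 phi0 i = phi0 i"
    and unique: "\<forall>v. (\<forall>i<n. mat_vec n U2 v i = v i) \<longrightarrow> (\<exists>a. \<forall>i<n. v i = a * phi0 i)"
    and overlap: "cinner n phi0 mu \<noteq> 0"
    and w_fixed: "\<forall>i<n. mat_vec n (mat_mult n U2 (reflection mu)) w i = w i"
    and "i < n"
  shows "w i = 0"
proof -
  define a where "a = cinner n mu w"
  define u where "u = mat_vec n (reflection mu) w"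
  have u: "\<And>i. i < n \<Longrightarrow> u i = w i - 2 * mu i * a"
    unfolding u_def a_def by (rule mat_vec_reflection)
  have U2u: "\<forall>i<n. mat_vec n U2 u i = w i" using w_fixed by (simp add: mat_vec_mat_mult u_def)
  have "cinner n phi0 w = cinner n phi0 (mat_vec n U2 u)"
    unfolding cinner_def using U2u by (intro sum.cong) auto
  also have "\<dots> = cinner n phi0 u" by (rule cinner_unitary_fixed[OF unitary fixed])
  also have "\<dots> = cinner n phi0 w - 2 * a * cinner n phi0 mu"
    by (simp add: cinner_def u algebra_simps sum_subtractf sum_distrib_left)
  finally have a0: "a = 0" using overlap by simp
  have "\<forall>i<n. mat_vec n U2 w i = w i"
    using U2u u a0 by (simp add: mat_vec_def)
  then obtain b where b: "\<forall>i<n. w i = b * phi0 i" using unique by blast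
  then have "a = b * cinner n mu phi0"
    unfolding a_def cinner_def by (simp add: sum_distrib_left mult_ac)
  moreover have "cinner n mu phi0 \<noteq> 0" using overlap cinner_commute[of n mu phi0] by auto
  ultimately show ?thesis using a0 b \<open>i < n\<close> by simp
qed

lemma eigenphase_mult_reflection_nonzero:
  assumes unitary: "unitary_mat n U2" and fixed: "\<forall>i<n. mat_vec n U2 phi0 i = phi0 i"
    and unique: "\<forall>v. (\<forall>i<n. mat_vec n U2 v i = v i) \<longrightarrow> (\<exists>a. \<forall>i<n. v i = a * phi0 i)"
    and overlap: "cinner n phi0 mu \<noteq> 0"
    and basis: "orthonormal_eigenbasis n (mat_mult n U2 (reflection mu)) w \<theta>"
    and "k < n"
  shows "\<theta> k \<noteq> 0"
proof
  assume "\<theta> k = 0"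
  then have "\<forall>i<n. mat_vec n (mat_mult n U2 (reflection mu)) (w k) i = w k i"
    using orthonormal_eigenbasisD(2)[OF basis \<open>k < n\<close>] by simp
  then have "\<forall>i<n. w k i = 0"
    using fixed_vector_mult_reflection[OF unitary fixed unique overlap] by blast
  then have "cinner n (w k) (w k) = 0" by (simp add: cinner_def)
  then show False using orthonormal_eigenbasisD(1)[OF basis] \<open>k < n\<close> by simp
qed

lemma cnorm2_perp_part:
  assumes "cnorm2 n mu = 1"
  shows "cnorm2 n (perp_part n mu v) = cnorm2 n v - (cmod (cinner n mu v))\<^sup>2"
proof -
  define a where "a = cinner n mu v"
  have "(\<Sum>i<n. mu i * cnj (mu i)) = complex_of_real (cnorm2 n mu)"
    by (simp only: cnorm2_def of_real_sum complex_norm_square)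
  then have mu: "(\<Sum>i<n. mu i * cnj (mu i)) = 1" using assms by simp
  have "complex_of_real (cnorm2 n (perp_part n mu v))
      = (\<Sum>i<n. (v i - a * mu i) * cnj (v i - a * mu i))"
    by (simp only: cnorm2_def of_real_sum complex_norm_square perp_part_def a_def)
  also have "\<dots> = (\<Sum>i<n. v i * cnj (v i)) - cnj a * (\<Sum>i<n. v i * cnj (mu i))
       - a * (\<Sum>i<n. mu i * cnj (v i)) + a * cnj a * (\<Sum>i<n. mu i * cnj (mu i))"
    by (simp add: algebra_simps sum.distrib sum_subtractf sum_distrib_left)
  also have "\<dots> = (\<Sum>i<n. v i * cnj (v i)) - a * cnj a"
    by (simp add: a_def cinner_def mu mult.commute)
  also have "\<dots> = complex_of_real (cnorm2 n v - (cmod a)\<^sup>2)"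
    by (simp only: cnorm2_def of_real_sum complex_norm_square of_real_diff)
  finally show ?thesis unfolding a_def using of_real_eq_iff by metis
qed

subsection \<open>The quantum hitting time\<close>

text \<open>The tail \<open>y \<mapsto> \<Sum>\<^sub>k [q\<^sub>k > y] p\<^sub>k\<close> is a right-continuous step function, so the
  infimum defining the hitting time is attained and the bound holds at every larger \<open>T\<close>.\<close>
lemma tail_le_of_Inf_le:
  fixes q p :: "nat \<Rightarrow> real"
  assumes p: "\<And>k. p k \<ge> 0" and "0 \<le> \<epsilon>"
    and T: "T \<ge> Inf {y. 0 \<le> y \<and> (\<Sum>k<n. if q k > y then p k else 0) \<le> \<epsilon>}"
  shows "(\<Sum>k<n. if q k > T then p k else 0) \<le> \<epsilon>"
proof (rule ccontr)
  define f where "f y = (\<Sum>k<n. if q k > y then p k else 0)" for y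
  define S where "S = {y. 0 \<le> y \<and> f y \<le> \<epsilon>}"
  assume "\<not> ?thesis"
  then have fT: "f T > \<epsilon>" by (simp add: f_def)
  define F where "F = q ` {k. k < n \<and> q k > T}"
  have "finite F" by (simp add: F_def)
  moreover have "F \<noteq> {}"
  proof
    assume "F = {}"
    then have "f T = 0" by (auto simp: F_def f_def intro!: sum.neutral)
    then show False using fT \<open>0 \<le> \<epsilon>\<close> by simp
  qed
  ultimately have "Min F > T" and Min_le: "\<And>k. k < n \<Longrightarrow> q k > T \<Longrightarrow> Min F \<le> q k"
    by (auto simp: F_def)
  have S_ge: "Min F \<le> y" if "y \<in> S" for y
  proof (rule ccontr)
    assume "\<not> Min F \<le> y"
    then have "f T \<le> f y"
      unfolding f_def using Min_le p by (intro sum_mono) (fastforce simp: not_le)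
    then show False using fT that by (auto simp: S_def)
  qed
  define y1 where "y1 = (\<Sum>k<n. \<bar>q k\<bar>)"
  have q_le: "q k \<le> y1" if "k < n" for k
    using that member_le_sum[of k "{..<n}" "\<lambda>k. \<bar>q k\<bar>"] unfolding y1_def by auto
  have "f y1 = 0" unfolding f_def by (intro sum.neutral ballI) (fastforce dest: q_le)
  then have "y1 \<in> S" using \<open>0 \<le> \<epsilon>\<close> by (simp add: S_def y1_def sum_nonneg)
  then have "Min F \<le> Inf S" using S_ge by (intro cInf_greatest) auto
  moreover have "Inf S \<le> T" using T by (simp add: S_def f_def)
  ultimately show False using \<open>Min F > T\<close> by simp
qed

subsection \<open>Phase estimation\<close>

lemma phase_dist_0:
  assumes "-pi < t" "t \<le> pi"
  shows "phase_dist 0 t = \<bar>t\<bar>"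
proof (cases "t = pi")
  case True
  have "cis (-pi) = -1" by (simp add: complex_eq_iff)
  then show ?thesis using Arg_cis[of pi] True by (simp add: phase_dist_def)
next
  case False
  then show ?thesis using assms by (simp add: phase_dist_def Arg_cis)
qed

lemma valid_estimate_pmf_0_le:
  assumes "valid_estimate \<Delta> est" and "-pi < t" "t \<le> pi" and "\<Delta> \<le> \<bar>t\<bar>"
  shows "pmf (est t) 0 \<le> 1/3"
proof -
  let ?A = "{y. phase_dist y t < \<Delta>}"
  have "measure_pmf.prob (est t) ?A \<ge> 2/3" using assms by (simp add: valid_estimate_def)
  moreover have "0 \<notin> ?A" using phase_dist_0[of t] assms by simp
  then have "measure_pmf.prob (est t) ({0} \<union> ?A)
      = measure_pmf.prob (est t) {0} + measure_pmf.prob (est t) ?A"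
    by (intro measure_pmf.finite_measure_Union) auto
  moreover have "measure_pmf.prob (est t) ({0} \<union> ?A) \<le> 1" by (rule measure_pmf.prob_le_1)
  ultimately show ?thesis by (simp add: measure_pmf_single)
qed

lemma one_third_power_le:
  fixes c \<epsilon> :: real
  assumes "1 \<le> c" and "0 < \<epsilon>" "\<epsilon> < 1"
  shows "(1/3::real) ^ nat \<lceil>c * ln (1 / \<epsilon>)\<rceil> \<le> \<epsilon>"
proof -
  define m where "m = nat \<lceil>c * ln (1 / \<epsilon>)\<rceil>"
  have "ln (1/\<epsilon>) \<le> c * ln (1/\<epsilon>)" using assms by simp
  then have m: "ln (1/\<epsilon>) \<le> real m" unfolding m_def by linarith
  have "1/3 \<le> exp (-1::real)" using exp_le by (simp add: exp_minus field_simps)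
  then have "(1/3::real) ^ m \<le> exp (-1) ^ m" by (intro power_mono) auto
  also have "\<dots> = exp (- real m)" by (simp add: exp_of_nat_mult[symmetric])
  also have "\<dots> \<le> exp (- ln (1/\<epsilon>))" using m by simp
  also have "\<dots> = \<epsilon>" using assms by (simp add: ln_div exp_minus)
  finally show ?thesis unfolding m_def .
qed

subsection \<open>Acceptance probability of MainDetect\<close>

lemma main_detect_accept_orthogonal:
  assumes basis: "orthonormal_eigenbasis n (mat_mult n U2 (reflection mu)) w \<theta>"
    and fixed: "\<forall>i<n. mat_vec n U2 phi0 i = phi0 i" and orthogonal: "cinner n mu phi0 = 0"
    and est_0: "est 0 = return_pmf 0"
  shows "main_detect_accept n mu w \<theta> est m phi0 = 0"
proof -
  have perp: "perp_part n mu phi0 = phi0" by (simp add: perp_part_def orthogonal)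
  have "mat_vec n (reflection mu) phi0 i = phi0 i" if "i < n" for i
    using that by (simp add: mat_vec_reflection orthogonal)
  then have U_fixed: "\<forall>i<n. mat_vec n (mat_mult n U2 (reflection mu)) phi0 i = phi0 i"
    using fixed by (simp add: mat_vec_mat_mult mat_vec_def[of n U2])
  have "(cmod (cinner n (w k) phi0))\<^sup>2 * pmf (est (\<theta> k)) 0 ^ m = (cmod (cinner n (w k) phi0))\<^sup>2"
    if "k < n" for k
    using fixed_vector_orthogonal_eigenvector[OF basis U_fixed that] est_0
    by (cases "\<theta> k = 0") auto
  then have "(\<Sum>k<n. (cmod (cinner n (w k) phi0))\<^sup>2 * pmf (est (\<theta> k)) 0 ^ m)
      = (\<Sum>k<n. (cmod (cinner n (w k) phi0))\<^sup>2)"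
    by (intro sum.cong) auto
  then show ?thesis
    using orthonormal_parseval[OF orthonormal_eigenbasisD(1)[OF basis], of phi0]
    by (simp add: main_detect_accept_def detect_accept_def perp orthogonal)
qed

lemma main_detect_accept_ge:
  assumes unitary: "unitary_mat n U2" and fixed: "\<forall>i<n. mat_vec n U2 phi0 i = phi0 i"
    and unique: "\<forall>v. (\<forall>i<n. mat_vec n U2 v i = v i) \<longrightarrow> (\<exists>a. \<forall>i<n. v i = a * phi0 i)"
    and mu_norm: "cnorm2 n mu = 1" and phi0_norm: "cnorm2 n phi0 = 1"
    and overlap: "cinner n phi0 mu \<noteq> 0"
    and basis: "orthonormal_eigenbasis n (mat_mult n U2 (reflection mu)) w \<theta>"
    and "0 < \<epsilon>" and T: "T \<ge> max 1 (QHT n U2 mu phi0 w \<theta> \<epsilon>)"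
    and estimate: "valid_estimate (1 / T) est" and m: "(1/3::real) ^ m \<le> \<epsilon>"
  shows "main_detect_accept n mu w \<theta> est m phi0 \<ge> 1 - 2 * \<epsilon>"
proof -
  define c where "c k = (cmod (cinner n (w k) (perp_part n mu phi0)))\<^sup>2" for k
  define far where "far k \<longleftrightarrow> QH_val (\<theta> k) > T" for k
  have c_nonneg: "0 \<le> c k" for k by (simp add: c_def)
  have weight: "(\<Sum>k<n. c k) = 1 - (cmod (cinner n mu phi0))\<^sup>2"
    using orthonormal_parseval[OF orthonormal_eigenbasisD(1)[OF basis], of "perp_part n mu phi0"]
      cnorm2_perp_part[OF mu_norm, of phi0] phi0_norm
    by (simp add: c_def)
  have tail: "(\<Sum>k<n. if far k then c k else 0) \<le> \<epsilon>"
    unfolding far_def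
  proof (rule tail_le_of_Inf_le)
    show "Inf {y. 0 \<le> y \<and> (\<Sum>k<n. if QH_val (\<theta> k) > y then c k else 0) \<le> \<epsilon>} \<le> T"
      using T unfolding c_def by (simp add: QHT_def QH_tail_def)
  qed (use \<open>0 < \<epsilon>\<close> in \<open>auto simp: c_def\<close>)
  have "c k * pmf (est (\<theta> k)) 0 ^ m \<le> (if far k then c k else 0) + \<epsilon> * c k"
    if "k < n" for k
  proof (cases "far k")
    case True
    have "pmf (est (\<theta> k)) 0 ^ m \<le> 1" by (simp add: power_le_one pmf_le_1)
    then have "c k * pmf (est (\<theta> k)) 0 ^ m \<le> c k" using c_nonneg by (rule mult_left_le)
    moreover have "0 \<le> \<epsilon> * c k" using \<open>0 < \<epsilon>\<close> c_nonneg by simp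
    ultimately show ?thesis using True by simp
  next
    case False
    have "\<theta> k \<noteq> 0"
      using eigenphase_mult_reflection_nonzero[OF unitary fixed unique overlap basis \<open>k < n\<close>] .
    with False T have "1 / T \<le> \<bar>\<theta> k\<bar>"
      by (simp add: far_def QH_val_def field_simps)
    then have "pmf (est (\<theta> k)) 0 \<le> 1/3"
      using valid_estimate_pmf_0_le[OF estimate] orthonormal_eigenbasisD(3)[OF basis \<open>k < n\<close>]
      by blast
    then have "pmf (est (\<theta> k)) 0 ^ m \<le> \<epsilon>"
      using m order_trans[OF power_mono] by (metis pmf_nonneg)
    then have "c k * pmf (est (\<theta> k)) 0 ^ m \<le> c k * \<epsilon>" using c_nonneg by (rule mult_left_mono)
    then show ?thesis using False by (simp add: mult.commute)
  qed
  then have "(\<Sum>k<n. c k * pmf (est (\<theta> k)) 0 ^ m)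
      \<le> (\<Sum>k<n. if far k then c k else 0) + \<epsilon> * (\<Sum>k<n. c k)"
    unfolding sum_distrib_left sum.distrib[symmetric] by (rule sum_mono) simp
  also have "\<dots> \<le> \<epsilon> + \<epsilon> * 1"
    using tail weight \<open>0 < \<epsilon>\<close> by (intro add_mono mult_left_mono) auto
  finally show ?thesis
    using cnorm2_perp_part[OF mu_norm, of phi0] phi0_norm
    by (simp add: main_detect_accept_def detect_accept_def c_def)
qed

theorem corollary1:
  "\<exists>c0>0. \<forall>c\<ge>c0. \<exists>C. \<forall>(n::nat) U2 mu phi0 (\<epsilon>::real) (T::real) w \<theta> est.
     unitary_mat n U2 \<and> real_mat n U2 \<and>
     real_vec n phi0 \<and> cnorm2 n phi0 = 1 \<and> (\<forall>i<n. mat_vec n U2 phi0 i = phi0 i) \<and>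
     (\<forall>v. (\<forall>i<n. mat_vec n U2 v i = v i) \<longrightarrow> (\<exists>a. \<forall>i<n. v i = a * phi0 i)) \<and>
     real_vec n mu \<and> cnorm2 n mu = 1 \<and>
     orthonormal_eigenbasis n (mat_mult n U2 (reflection mu)) w \<theta> \<and>
     0 < \<epsilon> \<and> \<epsilon> < 1 \<and>
     T \<ge> max 1 (QHT n U2 mu phi0 w \<theta> \<epsilon>) \<and>
     valid_estimate (1 / T) est
     \<longrightarrow>
     (let acc = main_detect_accept n mu w \<theta> est (nat \<lceil>c * ln (1 / \<epsilon>)\<rceil>) phi0 in
       (cinner n phi0 mu \<noteq> 0 \<longrightarrow> acc \<ge> 1 - C * \<epsilon>) \<and>
       (cinner n phi0 mu = 0 \<longrightarrow> acc = 0))"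
  unfolding Let_def
proof (rule exI[of _ "1::real"], intro conjI allI impI, goal_cases)
  case (2 c)
  show ?case
  proof (rule exI[of _ "2::real"], intro allI impI conjI, goal_cases)
    case (1 n U2 mu phi0 \<epsilon> T w \<theta> est)
    then show ?case
      using main_detect_accept_ge one_third_power_le[OF \<open>1 \<le> c\<close>] by blast
  next
    case (2 n U2 mu phi0 \<epsilon> T w \<theta> est)
    then show ?case
      using main_detect_accept_orthogonal[of n U2 mu w \<theta> phi0 est] cinner_commute[of n mu phi0]
      by (auto simp: valid_estimate_def)
  qed
qed simp

end
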